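(* Let $D=(V,E)$ be a finite connected graph with weights $\mathbf c_e\ge1$, and let $H$ be a positive height function on $D$. Let $h$ be drawn randomly among height functions with $|h|=H$, with probabilities proportional to $W(h)$ (resp. among those additionally satisfying $\mathrm{sign}(h)=+1$ on a given $S\subset V$). Let $B$ be an independent Bernoulli percolation with parameters $p_e=1-1/\mathbf c_e$ and $\omega$ the percolation defined from $(h,B)$ as below. Then: (1) the marginal law of $\omega$ is ${\sf P}^D_{\rm FK}[\,\cdot\mid E_{\rm fix}(H)\subset\omega]$ (resp. ${\sf P}^{D,+}_{\rm FK}[\,\cdot\mid E_{\rm fix}(H)\subset\omega]$, wired on $S$); (2) given $H$ and $\omega$, the conditional law of $\mathrm{sign}(h)$ is constant on each connected component of $(V,\omega)$, with independent fair coin flips on different components (resp. except that the sign is $+1$ on components intersecting $S$).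
   Context: $\mathbb Z_{\rm odd}=2\mathbb Z+1$. A height function on $D$ is $h:V\to\mathbb Z_{\rm odd}$ with $|h(v)-h(w)|\le2$ for all edges $\langle v,w\rangle$; it is positive if $h>0$. Weight: $W(h)=\prod_{e=\langle v,w\rangle\in E}\mathbf c_e^{\mathbb 1\{h(v)=h(w)\}}$. Fixed-sign edges: $E_{\rm fix}(H)=\{\langle v,w\rangle\in E:\max(H(v),H(w))\ge3\}$. Percolations: $B\in\{0,1\}^E$ has independent coordinates with $B_e=1$ with probability $p_e=1-1/\mathbf c_e$, independent of $h$; $\omega_{\langle v,w\rangle}=1$ if $\max(|h(v)|,|h(w)|)\ge3$, $\omega_{\langle v,w\rangle}=B_{\langle v,w\rangle}$ if $h(v)=h(w)\in\{\pm1\}$, and $\omega_{\langle v,w\rangle}=0$ if $\{h(v),h(w)\}=\{-1,1\}$. FK-Ising: ${\sf P}^D_{\rm FK}[\varpi]\propto 2^{c(\varpi)}\prod_{e}p_e^{\mathbb 1\{e\in\varpi\}}(1-p_e)^{\mathbb 1\{e\notin\varpi\}}$ for $\varpi\subset E$, with $c(\varpi)$ the number of connected components of $(V,\varpi)$; ${\sf P}^{D,+}_{\rm FK}$ (wired on $S$) is the same model on the graph where all vertices of $S$ are identified. *)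

theory Defs
  imports Complex_Main "HOL-Library.FuncSet"
begin

definition graph :: "'v set \<Rightarrow> 'v set set \<Rightarrow> bool" where
  "graph V E \<longleftrightarrow> finite V \<and> (\<forall>e\<in>E. e \<subseteq> V \<and> card e = 2)"

definition adj :: "'v set set \<Rightarrow> ('v \<times> 'v) set" where
  "adj F = {(v,w). \<exists>e\<in>F. v \<in> e \<and> w \<in> e}"

definition graph_connected :: "'v set \<Rightarrow> 'v set set \<Rightarrow> bool" where
  "graph_connected V E \<longleftrightarrow> (\<forall>v\<in>V. \<forall>w\<in>V. (v,w) \<in> (adj E)\<^sup>*)"

definition components :: "'v set \<Rightarrow> 'v set set \<Rightarrow> 'v set set" where
  "components V F = V // ((adj F)\<^sup>*)"

text \<open>Connected components of the graph (V, F) in which all vertices of S are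
  identified (wired on S).  Identifying S is encoded by connecting all pairs of S.\<close>
definition wired_components :: "'v set \<Rightarrow> 'v set \<Rightarrow> 'v set set \<Rightarrow> 'v set set" where
  "wired_components V S F = V // ((adj F \<union> S \<times> S)\<^sup>*)"

definition height_function :: "'v set \<Rightarrow> 'v set set \<Rightarrow> ('v \<Rightarrow> int) \<Rightarrow> bool" where
  "height_function V E h \<longleftrightarrow> h \<in> extensional V \<and> (\<forall>v\<in>V. odd (h v)) \<and>
     (\<forall>e\<in>E. \<forall>v\<in>e. \<forall>w\<in>e. \<bar>h v - h w\<bar> \<le> 2)"

definition positive_height_function :: "'v set \<Rightarrow> 'v set set \<Rightarrow> ('v \<Rightarrow> int) \<Rightarrow> bool" where
  "positive_height_function V E H \<longleftrightarrow> height_function V E H \<and> (\<forall>v\<in>V. H v > 0)"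

definition hweight :: "'v set set \<Rightarrow> ('v set \<Rightarrow> real) \<Rightarrow> ('v \<Rightarrow> int) \<Rightarrow> real" where
  "hweight E c h = (\<Prod>e\<in>E. c e ^ (if \<forall>v\<in>e. \<forall>w\<in>e. h v = h w then 1 else 0))"

definition E_fix :: "'v set set \<Rightarrow> ('v \<Rightarrow> int) \<Rightarrow> 'v set set" where
  "E_fix E H = {e\<in>E. \<exists>v\<in>e. H v \<ge> 3}"

definition pe :: "('v set \<Rightarrow> real) \<Rightarrow> 'v set \<Rightarrow> real" where
  "pe c e = 1 - 1 / c e"

definition bern_weight :: "'v set set \<Rightarrow> ('v set \<Rightarrow> real) \<Rightarrow> 'v set set \<Rightarrow> real" where
  "bern_weight E c B = (\<Prod>e\<in>E. if e \<in> B then pe c e else 1 - pe c e)"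

definition omega :: "'v set set \<Rightarrow> ('v \<Rightarrow> int) \<Rightarrow> 'v set set \<Rightarrow> 'v set set" where
  "omega E h B = {e\<in>E.
      if (\<exists>v\<in>e. \<bar>h v\<bar> \<ge> 3) then True
      else if (\<exists>s\<in>{-1,1::int}. \<forall>v\<in>e. h v = s) then e \<in> B
      else False}"

text \<open>Sample space: height functions h with |h| = H and h > 0 on S, together with B \<subseteq> E.
  (S = {} gives the unconstrained case.)\<close>
definition hspace :: "'v set \<Rightarrow> 'v set set \<Rightarrow> ('v \<Rightarrow> int) \<Rightarrow> 'v set \<Rightarrow> ('v \<Rightarrow> int) set" where
  "hspace V E H S = {h. height_function V E h \<and> (\<forall>v\<in>V. \<bar>h v\<bar> = H v) \<and> (\<forall>v\<in>S. h v > 0)}"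

definition joint_weight :: "'v set set \<Rightarrow> ('v set \<Rightarrow> real) \<Rightarrow> ('v \<Rightarrow> int) \<times> 'v set set \<Rightarrow> real" where
  "joint_weight E c x = hweight E c (fst x) * bern_weight E c (snd x)"

definition hprob :: "'v set \<Rightarrow> 'v set set \<Rightarrow> ('v set \<Rightarrow> real) \<Rightarrow> ('v \<Rightarrow> int) \<Rightarrow> 'v set
    \<Rightarrow> (('v \<Rightarrow> int) \<times> 'v set set \<Rightarrow> bool) \<Rightarrow> real" where
  "hprob V E c H S Q =
     (\<Sum>x\<in>{x\<in>hspace V E H S \<times> Pow E. Q x}. joint_weight E c x) /
     (\<Sum>x\<in>hspace V E H S \<times> Pow E. joint_weight E c x)"

text \<open>FK-Ising measure (wired on S) conditioned on F \<subseteq> varpi.  The factors of the edges in F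
  are the same for all varpi \<supseteq> F and cancel in the conditional probability; they are
  omitted so that the conditional measure is also defined when some p_e = 0 on F.  Whenever P[F \<subseteq> varpi] > 0 this is the elementary conditional probability.\<close>
definition fk_cond :: "'v set \<Rightarrow> 'v set set \<Rightarrow> ('v set \<Rightarrow> real) \<Rightarrow> 'v set \<Rightarrow> 'v set set
    \<Rightarrow> 'v set set \<Rightarrow> real" where
  "fk_cond V E c S F w =
     (let fw = (\<lambda>u. 2 ^ card (wired_components V S u) *
                   (\<Prod>e\<in>E - F. pe c e ^ (if e \<in> u then 1 else 0) * (1 - pe c e) ^ (if e \<notin> u then 1 else 0)))
      in (if F \<subseteq> w \<and> w \<subseteq> E then fw w else 0) / (\<Sum>u\<in>{u. F \<subseteq> u \<and> u \<subseteq> E}. fw u))"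

end

(*
  Fix h with |h| = H.  The Bernoulli mass of the coins B producing a given w factorizes over the
  edges: an edge with an endpoint of height at least 3 is always open and its endpoints have the
  same sign, while an edge with heights in {-1, 1} is open with probability p_e when the two signs
  agree and closed otherwise.  Hence W(h) P[omega(h, B) = w] is a factor depending on H only, times
  [E_fix(H) \<subseteq> w] prod_{e \<in> w - E_fix(H)} (c_e - 1), times the indicator that sgn h is constant
  along w.  Every sign assignment that is constant on the components of w and positive on S comes
  from a height function, so there are 2^k of them, k the number of components of w avoiding S.
  This count is the factor 2^(number of clusters) of the FK weight (wiring S merges the components
  meeting S into one cluster), and given omega = w the signs are uniform among these assignments.
*)
theory Submission
  imports Defs
begin

lemma prod_if_zero:
  assumes "finite A"
  shows "(\<Prod>x\<in>A. if P x then f x else (0::real)) = (if \<forall>x\<in>A. P x then prod f A else 0)"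
  using assms by (auto intro: prod.cong)

definition omega_edge :: "('v \<Rightarrow> int) \<Rightarrow> 'v set \<Rightarrow> bool \<Rightarrow> bool" where
  "omega_edge h e b \<longleftrightarrow>
     (if \<exists>v\<in>e. \<bar>h v\<bar> \<ge> 3 then True else if \<exists>s\<in>{-1,1::int}. \<forall>v\<in>e. h v = s then b else False)"

lemma omega_eq: "omega E h B = {e\<in>E. omega_edge h e (e \<in> B)}"
  unfolding omega_def omega_edge_def by auto

definition edge_constant :: "('v \<Rightarrow> 'a) \<Rightarrow> 'v set \<Rightarrow> bool" where
  "edge_constant f e \<longleftrightarrow> (\<forall>x\<in>e. \<forall>y\<in>e. f x = f y)"

lemma edge_constant_pair [simp]: "edge_constant f {x, y} \<longleftrightarrow> f x = f y"
  unfolding edge_constant_def by auto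

definition sign_consistent :: "'v set set \<Rightarrow> ('v \<Rightarrow> int) \<Rightarrow> bool" where
  "sign_consistent u h \<longleftrightarrow> (\<forall>e\<in>u. edge_constant (\<lambda>v. sgn (h v)) e)"

lemma hweight_eq: "hweight E c h = (\<Prod>e\<in>E. c e ^ (if edge_constant h e then 1 else 0))"
  unfolding hweight_def edge_constant_def ..

lemma graph_finite_edges: "graph V E \<Longrightarrow> finite E"
  unfolding graph_def by (meson PowI finite_Pow_iff finite_subset subsetI)

lemma graph_edgeE:
  assumes "graph V E" and "e \<in> E"
  obtains x y where "e = {x, y}" and "x \<noteq> y" and "x \<in> V" and "y \<in> V"
  using assms unfolding graph_def by (metis card_2_iff insert_subset)

lemma finite_hspace:
  assumes "graph V E"
  shows "finite (hspace V E H S)"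
proof (rule finite_subset)
  show "hspace V E H S \<subseteq> PiE V (\<lambda>v. {H v, - H v})"
    unfolding hspace_def height_function_def PiE_def Pi_def by (auto simp: abs_if)
  show "finite (PiE V (\<lambda>v. {H v, - H v}))"
    using assms unfolding graph_def by (intro finite_PiE) auto
qed

lemma hspace_fixed_edge_same_sign:
  assumes PH: "positive_height_function V E H" and h: "h \<in> hspace V E H S"
    and e: "{x, y} \<in> E" and xy: "x \<in> V" "y \<in> V" and high: "H x \<ge> 3 \<or> H y \<ge> 3"
  shows "sgn (h x) = sgn (h y)"
proof -
  have "H x > 0" "H y > 0"
    using PH xy unfolding positive_height_function_def by auto
  moreover have "\<bar>h x\<bar> = H x" "\<bar>h y\<bar> = H y" "\<bar>h x - h y\<bar> \<le> 2"
    using h xy e unfolding hspace_def height_function_def by auto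
  ultimately show ?thesis
    using high by (auto simp: sgn_if abs_if split: if_splits)
qed

lemma positive_height_eq_one:
  assumes "positive_height_function V E H" and "x \<in> V" and "H x < 3"
  shows "H x = 1"
proof -
  have "H x > 0" "odd (H x)"
    using assms unfolding positive_height_function_def height_function_def by auto
  then show ?thesis
    using assms(3) by presburger
qed

lemma hspace_low_vertex:
  assumes PH: "positive_height_function V E H" and h: "h \<in> hspace V E H S"
    and x: "x \<in> V" and low: "H x < 3"
  shows "h x = 1 \<or> h x = -1"
proof -
  have "\<bar>h x\<bar> = H x"
    using h x unfolding hspace_def by auto
  then show ?thesis
    using positive_height_eq_one[OF PH x low] by arith
qed

lemma fixed_edge_same_sign:
  assumes G: "graph V E" and PH: "positive_height_function V E H"
    and h: "h \<in> hspace V E H S" and e: "e \<in> E_fix E H"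
  shows "edge_constant (\<lambda>v. sgn (h v)) e"
proof -
  obtain x y where "e = {x, y}" "x \<in> V" "y \<in> V"
    using G e unfolding E_fix_def by (auto elim: graph_edgeE)
  with e show ?thesis
    using hspace_fixed_edge_same_sign[OF PH h] unfolding E_fix_def by auto
qed

lemma sum_bern_weight_omega:
  assumes fin: "finite E" and wE: "w \<subseteq> E"
  shows "(\<Sum>B\<in>{B\<in>Pow E. omega E h B = w}. bern_weight E c B) =
    (\<Prod>e\<in>E. (if omega_edge h e True = (e \<in> w) then pe c e else 0)
             + (if omega_edge h e False = (e \<in> w) then 1 - pe c e else 0))"
proof -
  let ?open = "\<lambda>e. if omega_edge h e True = (e \<in> w) then pe c e else 0"
  let ?closed = "\<lambda>e. if omega_edge h e False = (e \<in> w) then 1 - pe c e else 0"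
  have "(\<Prod>e\<in>E. ?open e + ?closed e) = (\<Sum>B\<in>Pow E. (\<Prod>e\<in>B. ?open e) * (\<Prod>e\<in>E - B. ?closed e))"
    by (rule prod_add[OF fin])
  also have "\<dots> = (\<Sum>B\<in>Pow E. if omega E h B = w then bern_weight E c B else 0)"
  proof (rule sum.cong[OF refl])
    fix B assume B: "B \<in> Pow E"
    have "(\<Prod>e\<in>B. ?open e) * (\<Prod>e\<in>E - B. ?closed e) = (\<Prod>e\<in>E. if e \<in> B then ?open e else ?closed e)"
    proof -
      have "E \<inter> {e. e \<in> B} = B" "E \<inter> - {e. e \<in> B} = E - B"
        using B by auto
      then show ?thesis
        using prod.If_cases[OF fin, of "\<lambda>e. e \<in> B" ?open ?closed] by simp
    qed
    also have "\<dots> = (\<Prod>e\<in>E. if omega_edge h e (e \<in> B) = (e \<in> w)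
                               then (if e \<in> B then pe c e else 1 - pe c e) else 0)"
      by (rule prod.cong) auto
    also have "\<dots> = (if \<forall>e\<in>E. omega_edge h e (e \<in> B) = (e \<in> w) then bern_weight E c B else 0)"
      unfolding bern_weight_def by (rule prod_if_zero[OF fin])
    also have "(\<forall>e\<in>E. omega_edge h e (e \<in> B) = (e \<in> w)) \<longleftrightarrow> omega E h B = w"
      unfolding omega_eq using wE by auto
    finally show "(\<Prod>e\<in>B. ?open e) * (\<Prod>e\<in>E - B. ?closed e)
        = (if omega E h B = w then bern_weight E c B else 0)" .
  qed
  also have "\<dots> = (\<Sum>B\<in>{B\<in>Pow E. omega E h B = w}. bern_weight E c B)"
    by (rule sum.inter_filter[symmetric]) (simp add: fin)
  finally show ?thesis ..
qed

lemma edge_factor: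
  assumes G: "graph V E" and PH: "positive_height_function V E H"
    and h: "h \<in> hspace V E H S" and e: "e \<in> E" and c: "c e \<ge> 1"
  shows "c e ^ (if edge_constant h e then 1 else 0) *
      ((if omega_edge h e True = (e \<in> w) then pe c e else 0)
       + (if omega_edge h e False = (e \<in> w) then 1 - pe c e else 0))
    = (if e \<in> E_fix E H then (if e \<in> w then c e ^ (if edge_constant H e then 1 else 0) else 0)
       else if e \<in> w then (if edge_constant (\<lambda>v. sgn (h v)) e then c e - 1 else 0) else 1)"
proof -
  obtain x y where exy: "e = {x, y}" and xy: "x \<in> V" "y \<in> V"
    using G e by (rule graph_edgeE)
  have abs_h: "\<bar>h x\<bar> = H x" "\<bar>h y\<bar> = H y"
    using h xy unfolding hspace_def by auto
  have fixed_iff: "e \<in> E_fix E H \<longleftrightarrow> H x \<ge> 3 \<or> H y \<ge> 3"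
    using e exy unfolding E_fix_def by auto
  show ?thesis
  proof (cases "H x \<ge> 3 \<or> H y \<ge> 3")
    case True
    have "sgn (h x) = sgn (h y)"
      using hspace_fixed_edge_same_sign[OF PH h] e exy xy True by simp
    then have "h x = h y \<longleftrightarrow> H x = H y"
      using abs_h by (auto simp: sgn_if abs_if split: if_splits)
    moreover have "omega_edge h e b" for b
      using True abs_h exy unfolding omega_edge_def by auto
    ultimately show ?thesis
      using True exy fixed_iff by (cases "e \<in> w") (simp_all add: pe_def)
  next
    case False
    have h_unit: "h x = 1 \<or> h x = -1" "h y = 1 \<or> h y = -1"
      using hspace_low_vertex[OF PH h] xy False by auto
    then have "omega_edge h e b \<longleftrightarrow> h x = h y \<and> b" for b
      using exy unfolding omega_edge_def by auto
    moreover have "sgn (h x) = sgn (h y) \<longleftrightarrow> h x = h y"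
      using h_unit by auto
    moreover have "c e \<noteq> 0"
      using c by auto
    ultimately show ?thesis
      using False exy fixed_iff
      by (cases "h x = h y"; cases "e \<in> w") (simp_all add: pe_def right_diff_distrib)
  qed
qed

definition fixed_edge_weight :: "'v set set \<Rightarrow> ('v set \<Rightarrow> real) \<Rightarrow> ('v \<Rightarrow> int) \<Rightarrow> real" where
  "fixed_edge_weight E c H = (\<Prod>e\<in>E_fix E H. c e ^ (if edge_constant H e then 1 else 0))"

text \<open>The factor c_e - 1 = p_e / (1 - p_e) is the odds of an open edge.\<close>
definition odds_weight :: "('v set \<Rightarrow> real) \<Rightarrow> 'v set set \<Rightarrow> 'v set set \<Rightarrow> real" where
  "odds_weight c F w = (if F \<subseteq> w then (\<Prod>e\<in>w - F. c e - 1) else 0)"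

lemma fixed_edge_weight_pos: "\<forall>e\<in>E. c e \<ge> 1 \<Longrightarrow> fixed_edge_weight E c H > 0"
  unfolding fixed_edge_weight_def E_fix_def by (rule prod_pos) (auto intro: less_le_trans[of 0 1])

lemma sum_joint_weight_omega:
  assumes G: "graph V E" and PH: "positive_height_function V E H" and c: "\<forall>e\<in>E. c e \<ge> 1"
    and h: "h \<in> hspace V E H S" and wE: "w \<subseteq> E"
  shows "(\<Sum>B\<in>{B\<in>Pow E. omega E h B = w}. joint_weight E c (h, B))
    = fixed_edge_weight E c H * odds_weight c (E_fix E H) w * (if sign_consistent w h then 1 else 0)"
proof -
  let ?F = "E_fix E H"
  have fin: "finite E"
    using G by (rule graph_finite_edges)
  have FE: "?F \<subseteq> E"
    unfolding E_fix_def by auto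
  define \<phi> where "\<phi> e = (if e \<in> ?F then (if e \<in> w then c e ^ (if edge_constant H e then 1 else 0) else 0)
      else if e \<in> w then (if edge_constant (\<lambda>v. sgn (h v)) e then c e - 1 else 0) else 1)" for e
  have "(\<Sum>B\<in>{B\<in>Pow E. omega E h B = w}. joint_weight E c (h, B))
      = hweight E c h * (\<Sum>B\<in>{B\<in>Pow E. omega E h B = w}. bern_weight E c B)"
    unfolding joint_weight_def by (simp add: sum_distrib_left)
  also have "\<dots> = (\<Prod>e\<in>E. \<phi> e)"
    unfolding sum_bern_weight_omega[OF fin wE] hweight_eq prod.distrib[symmetric] \<phi>_def
    using edge_factor[OF G PH h] c by (intro prod.cong) auto
  also have "\<dots> = (\<Prod>e\<in>E - ?F. \<phi> e) * (\<Prod>e\<in>?F. \<phi> e)"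
    by (rule prod.subset_diff[OF FE fin])
  also have "(\<Prod>e\<in>?F. \<phi> e) = (\<Prod>e\<in>?F. if e \<in> w then c e ^ (if edge_constant H e then 1 else 0) else 0)"
    unfolding \<phi>_def by (intro prod.cong) auto
  also have "\<dots> = (if ?F \<subseteq> w then fixed_edge_weight E c H else 0)"
    unfolding fixed_edge_weight_def using finite_subset[OF FE fin] by (simp add: prod_if_zero subset_eq)
  also have "(\<Prod>e\<in>E - ?F. \<phi> e) = (\<Prod>e\<in>w - ?F. if edge_constant (\<lambda>v. sgn (h v)) e then c e - 1 else 0)"
    unfolding \<phi>_def using fin wE by (intro prod.mono_neutral_cong_right) auto
  also have "\<dots> = (if \<forall>e\<in>w - ?F. edge_constant (\<lambda>v. sgn (h v)) e then \<Prod>e\<in>w - ?F. c e - 1 else 0)"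
    using finite_subset[OF wE fin] by (simp add: prod_if_zero)
  also have "(\<forall>e\<in>w - ?F. edge_constant (\<lambda>v. sgn (h v)) e) \<longleftrightarrow> sign_consistent w h"
    unfolding sign_consistent_def using fixed_edge_same_sign[OF G PH h] by auto
  finally show ?thesis
    unfolding odds_weight_def by auto
qed

lemma sum_joint_weight_omega_filter:
  assumes G: "graph V E" and PH: "positive_height_function V E H" and c: "\<forall>e\<in>E. c e \<ge> 1"
    and wE: "w \<subseteq> E"
  shows "(\<Sum>x\<in>{x\<in>hspace V E H S \<times> Pow E. omega E (fst x) (snd x) = w \<and> P (fst x)}. joint_weight E c x)
    = fixed_edge_weight E c H * odds_weight c (E_fix E H) w
      * card {h\<in>hspace V E H S. sign_consistent w h \<and> P h}"
proof -
  let ?hs = "hspace V E H S"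
  have fin: "finite ?hs" "finite E"
    using finite_hspace[OF G] graph_finite_edges[OF G] by auto
  have "{x\<in>?hs \<times> Pow E. omega E (fst x) (snd x) = w \<and> P (fst x)}
      = Sigma {h\<in>?hs. P h} (\<lambda>h. {B\<in>Pow E. omega E h B = w})"
    by auto
  then have "(\<Sum>x\<in>{x\<in>?hs \<times> Pow E. omega E (fst x) (snd x) = w \<and> P (fst x)}. joint_weight E c x)
      = (\<Sum>h\<in>{h\<in>?hs. P h}. \<Sum>B\<in>{B\<in>Pow E. omega E h B = w}. joint_weight E c (h, B))"
    using fin by (simp add: sum.Sigma)
  also have "\<dots> = (\<Sum>h\<in>{h\<in>?hs. P h}. fixed_edge_weight E c H * odds_weight c (E_fix E H) w
                                        * (if sign_consistent w h then 1 else 0))"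
    using sum_joint_weight_omega[OF G PH c _ wE] by (intro sum.cong) auto
  also have "\<dots> = fixed_edge_weight E c H * odds_weight c (E_fix E H) w
                  * card {h\<in>{h\<in>?hs. P h}. sign_consistent w h}"
    using fin by (simp add: sum_distrib_left[symmetric] sum.inter_filter[symmetric])
  also have "{h\<in>{h\<in>?hs. P h}. sign_consistent w h} = {h\<in>?hs. sign_consistent w h \<and> P h}"
    by auto
  finally show ?thesis .
qed

lemma hprob_omega:
  assumes G: "graph V E" and PH: "positive_height_function V E H" and c: "\<forall>e\<in>E. c e \<ge> 1"
    and wE: "w \<subseteq> E"
  shows "hprob V E c H S (\<lambda>(h, B). omega E h B = w \<and> P h)
    = odds_weight c (E_fix E H) w * card {h\<in>hspace V E H S. sign_consistent w h \<and> P h}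
      / (\<Sum>u\<in>Pow E. odds_weight c (E_fix E H) u * card {h\<in>hspace V E H S. sign_consistent u h})"
proof -
  let ?hs = "hspace V E H S" and ?A = "fixed_edge_weight E c H"
  have fin: "finite ?hs" "finite E"
    using finite_hspace[OF G] graph_finite_edges[OF G] by auto
  have "(\<Sum>x\<in>?hs \<times> Pow E. joint_weight E c x)
      = (\<Sum>u\<in>Pow E. \<Sum>x\<in>{x\<in>?hs \<times> Pow E. omega E (fst x) (snd x) = u}. joint_weight E c x)"
    using fin by (intro sum.group[symmetric]) (auto simp: omega_def)
  also have "\<dots> = ?A * (\<Sum>u\<in>Pow E. odds_weight c (E_fix E H) u * card {h\<in>?hs. sign_consistent u h})"
    using sum_joint_weight_omega_filter[OF G PH c, where P = "\<lambda>_. True"]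
    by (simp add: sum_distrib_left mult.assoc)
  finally have partition: "(\<Sum>x\<in>?hs \<times> Pow E. joint_weight E c x)
      = ?A * (\<Sum>u\<in>Pow E. odds_weight c (E_fix E H) u * card {h\<in>?hs. sign_consistent u h})" .
  have "(\<Sum>x\<in>{x\<in>?hs \<times> Pow E. (\<lambda>(h, B). omega E h B = w \<and> P h) x}. joint_weight E c x)
      = ?A * (odds_weight c (E_fix E H) w * card {h\<in>?hs. sign_consistent w h \<and> P h})"
    using sum_joint_weight_omega_filter[OF G PH c wE] by (simp add: case_prod_beta mult.assoc)
  then show ?thesis
    unfolding hprob_def partition using fixed_edge_weight_pos[OF c, of H] by simp
qed

lemma equiv_rtrancl_of_sym: "sym r \<Longrightarrow> equiv UNIV (r\<^sup>*)"
  by (simp add: equiv_def refl_rtrancl sym_rtrancl trans_rtrancl)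

lemma sym_adj: "sym (adj F)"
  unfolding adj_def sym_def by auto

lemmas equiv_adj_rtrancl = equiv_rtrancl_of_sym[OF sym_adj]

lemma adj_rtrancl_closed:
  assumes G: "graph V E" and uE: "u \<subseteq> E" and xy: "(x, y) \<in> (adj u)\<^sup>*" and x: "x \<in> V"
  shows "y \<in> V"
  using xy x
proof (induction rule: rtrancl_induct)
  case (step y z)
  then show ?case
    using G uE unfolding adj_def graph_def by auto
qed

lemma components_subset:
  assumes G: "graph V E" and uE: "u \<subseteq> E" and C: "C \<in> components V u"
  shows "C \<subseteq> V"
proof -
  obtain x where "x \<in> V" and "C = (adj u)\<^sup>* `` {x}"
    using C unfolding components_def by (rule quotientE)
  then show ?thesis
    using adj_rtrancl_closed[OF G uE] by blast
qed

lemma component_of_member: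
  assumes C: "C \<in> components V u" and x: "x \<in> C"
  shows "C = (adj u)\<^sup>* `` {x}"
proof -
  obtain z where "C = (adj u)\<^sup>* `` {z}"
    using C unfolding components_def by (rule quotientE)
  then show ?thesis
    using x equiv_class_eq[OF equiv_adj_rtrancl] by simp
qed

lemma component_of_vertex: "v \<in> V \<Longrightarrow> (adj u)\<^sup>* `` {v} \<in> components V u"
  unfolding components_def by (rule quotientI)

lemma some_in_component:
  assumes "C \<in> components V u"
  shows "(SOME v. v \<in> C) \<in> C"
proof -
  obtain x where "C = (adj u)\<^sup>* `` {x}"
    using assms unfolding components_def by (rule quotientE)
  then have "x \<in> C"
    by simp
  then show ?thesis
    by (rule someI)
qed

lemma finite_components: "graph V E \<Longrightarrow> finite (components V u)"
  unfolding graph_def components_def quotient_def by auto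

definition free_components :: "'v set \<Rightarrow> 'v set set \<Rightarrow> 'v set \<Rightarrow> 'v set set" where
  "free_components V u S = {C\<in>components V u. C \<inter> S = {}}"

definition constant_on_components :: "'v set \<Rightarrow> 'v set set \<Rightarrow> ('v \<Rightarrow> 'a) \<Rightarrow> bool" where
  "constant_on_components V u f \<longleftrightarrow> (\<forall>C\<in>components V u. \<forall>x\<in>C. \<forall>y\<in>C. f x = f y)"

lemma constant_along_rtrancl_adj:
  assumes "\<forall>e\<in>u. edge_constant f e" and "(x, y) \<in> (adj u)\<^sup>*"
  shows "f x = f y"
  using assms(2)
proof (induction rule: rtrancl_induct)
  case (step y z)
  then show ?case
    using assms(1) unfolding adj_def edge_constant_def by auto
qed simp

lemma edges_constant_iff_components:
  assumes G: "graph V E" and uE: "u \<subseteq> E"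
  shows "(\<forall>e\<in>u. edge_constant f e) \<longleftrightarrow> constant_on_components V u f"
proof
  assume edges: "\<forall>e\<in>u. edge_constant f e"
  show "constant_on_components V u f"
    unfolding constant_on_components_def
  proof (intro ballI)
    fix C x y assume C: "C \<in> components V u" and x: "x \<in> C" and y: "y \<in> C"
    then have "(x, y) \<in> (adj u)\<^sup>*"
      using component_of_member[OF C x] by simp
    then show "f x = f y"
      by (rule constant_along_rtrancl_adj[OF edges])
  qed
next
  assume const: "constant_on_components V u f"
  show "\<forall>e\<in>u. edge_constant f e"
    unfolding edge_constant_def
  proof (intro ballI)
    fix e x y assume e: "e \<in> u" and x: "x \<in> e" and y: "y \<in> e"
    have "x \<in> V"
      using G uE e x unfolding graph_def by auto
    then have "(adj u)\<^sup>* `` {x} \<in> components V u"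
      by (rule component_of_vertex)
    moreover have "x \<in> (adj u)\<^sup>* `` {x}" "y \<in> (adj u)\<^sup>* `` {x}"
      using e x y unfolding adj_def by auto
    ultimately show "f x = f y"
      using const unfolding constant_on_components_def by blast
  qed
qed

lemma constant_on_components_cong:
  assumes G: "graph V E" and uE: "u \<subseteq> E" and fg: "\<forall>v\<in>V. f v = g v"
  shows "constant_on_components V u f \<longleftrightarrow> constant_on_components V u g"
proof -
  have fg_comp: "f x = g x" if "C \<in> components V u" "x \<in> C" for C x
    using fg components_subset[OF G uE that(1)] that(2) by blast
  show ?thesis
    unfolding constant_on_components_def
  proof (intro iffI ballI)
    fix C x y assume "\<forall>C\<in>components V u. \<forall>x\<in>C. \<forall>y\<in>C. f x = f y"
      and "C \<in> components V u" "x \<in> C" "y \<in> C"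
    then show "g x = g y"
      using fg_comp by metis
  next
    fix C x y assume "\<forall>C\<in>components V u. \<forall>x\<in>C. \<forall>y\<in>C. g x = g y"
      and "C \<in> components V u" "x \<in> C" "y \<in> C"
    then show "f x = f y"
      using fg_comp by metis
  qed
qed

lemma sign_consistent_iff_components:
  assumes "graph V E" and "u \<subseteq> E"
  shows "sign_consistent u h \<longleftrightarrow> constant_on_components V u (\<lambda>v. sgn (h v))"
  unfolding sign_consistent_def using edges_constant_iff_components[OF assms] .

lemma sign_consistent_in_hspace:
  assumes G: "graph V E" and PH: "positive_height_function V E H" and Fu: "E_fix E H \<subseteq> u"
    and ext: "h \<in> extensional V" and abs_h: "\<forall>v\<in>V. \<bar>h v\<bar> = H v" and pos: "\<forall>v\<in>S. h v > 0"
    and consistent: "sign_consistent u h"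
  shows "h \<in> hspace V E H S"
proof -
  have H: "\<forall>v\<in>V. H v > 0 \<and> odd (H v)" "\<forall>e\<in>E. \<forall>a\<in>e. \<forall>b\<in>e. \<bar>H a - H b\<bar> \<le> 2"
    using PH unfolding positive_height_function_def height_function_def by auto
  have "odd (h v)" if "v \<in> V" for v
  proof -
    have "h v = H v \<or> h v = - H v"
      using bspec[OF abs_h that] by arith
    then show ?thesis
      using H(1) that by auto
  qed
  moreover have "\<bar>h a - h b\<bar> \<le> 2" if e: "e \<in> E" "a \<in> e" "b \<in> e" for e a b
  proof -
    have ab: "a \<in> V" "b \<in> V"
      using G e unfolding graph_def by auto
    then have abs_ab: "\<bar>h a\<bar> = H a" "\<bar>h b\<bar> = H b"
      using abs_h by auto
    show ?thesis
    proof (cases "e \<in> E_fix E H")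
      case True
      then have "sgn (h a) = sgn (h b)"
        using consistent Fu e unfolding sign_consistent_def edge_constant_def by auto
      then have "\<bar>h a - h b\<bar> = \<bar>H a - H b\<bar>"
        using abs_ab by (auto simp: sgn_if abs_if split: if_splits)
      then show ?thesis
        using H(2) e by auto
    next
      case False
      then have "H a < 3" "H b < 3"
        using e unfolding E_fix_def by auto
      then have "H a = 1" "H b = 1"
        using positive_height_eq_one[OF PH] ab by auto
      then show ?thesis
        using abs_ab by arith
    qed
  qed
  ultimately show ?thesis
    unfolding hspace_def height_function_def using ext abs_h pos by auto
qed

definition sign_configs :: "'v set \<Rightarrow> 'v set set \<Rightarrow> 'v set \<Rightarrow> ('v \<Rightarrow> int) set" where
  "sign_configs V u S = {\<sigma> \<in> V \<rightarrow>\<^sub>E {-1, 1}. constant_on_components V u \<sigma> \<and> (\<forall>v\<in>S. \<sigma> v = 1)}"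

lemma sgn_restrict_sign_times_height:
  fixes \<sigma> H :: "'v \<Rightarrow> int"
  assumes \<sigma>: "\<sigma> \<in> V \<rightarrow>\<^sub>E {-1, 1}" and Hpos: "\<forall>v\<in>V. H v > 0"
  shows "(\<lambda>v\<in>V. sgn ((\<lambda>v\<in>V. \<sigma> v * H v) v)) = \<sigma>"
proof
  fix v show "(\<lambda>v\<in>V. sgn ((\<lambda>v\<in>V. \<sigma> v * H v) v)) v = \<sigma> v"
  proof (cases "v \<in> V")
    case True
    then have "\<sigma> v = 1 \<or> \<sigma> v = -1" "H v > 0"
      using \<sigma> Hpos by auto
    then show ?thesis
      using True by (auto simp: sgn_if)
  next
    case False
    then show ?thesis
      using PiE_arb[OF \<sigma> False] by simp
  qed
qed

lemma hspace_eq_sign_times_height: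
  assumes h: "h \<in> hspace V E H S"
  shows "(\<lambda>v\<in>V. (\<lambda>v\<in>V. sgn (h v)) v * H v) = h"
proof
  fix v show "(\<lambda>v\<in>V. (\<lambda>v\<in>V. sgn (h v)) v * H v) v = h v"
  proof (cases "v \<in> V")
    case True
    moreover have "\<bar>h v\<bar> = H v"
      using h True unfolding hspace_def by auto
    ultimately show ?thesis
      using sgn_mult_abs[of "h v"] by simp
  next
    case False
    have "h \<in> extensional V"
      using h unfolding hspace_def height_function_def by auto
    then show ?thesis
      using extensional_arb[of h V v] False by simp
  qed
qed

lemma sign_times_height_in_hspace:
  assumes G: "graph V E" and PH: "positive_height_function V E H" and SV: "S \<subseteq> V"
    and Fu: "E_fix E H \<subseteq> u" and uE: "u \<subseteq> E" and \<sigma>: "\<sigma> \<in> sign_configs V u S"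
  shows "(\<lambda>v\<in>V. \<sigma> v * H v) \<in> hspace V E H S"
    and "sign_consistent u (\<lambda>v\<in>V. \<sigma> v * H v)"
proof -
  let ?h = "\<lambda>v\<in>V. \<sigma> v * H v"
  have Hpos: "\<forall>v\<in>V. H v > 0"
    using PH unfolding positive_height_function_def by auto
  have PiE: "\<sigma> \<in> V \<rightarrow>\<^sub>E {-1, 1}"
    using \<sigma> unfolding sign_configs_def by auto
  have "\<forall>v\<in>V. sgn (?h v) = \<sigma> v"
    using sgn_restrict_sign_times_height[OF PiE Hpos] by (metis restrict_apply')
  then have "constant_on_components V u (\<lambda>v. sgn (?h v)) \<longleftrightarrow> constant_on_components V u \<sigma>"
    by (rule constant_on_components_cong[OF G uE])
  then show consistent: "sign_consistent u ?h"
    using \<sigma> unfolding sign_consistent_iff_components[OF G uE] sign_configs_def by blast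
  have "\<bar>?h v\<bar> = H v" if "v \<in> V" for v
  proof -
    have "\<sigma> v = 1 \<or> \<sigma> v = -1" "H v > 0"
      using PiE Hpos that by auto
    then show ?thesis
      using that by auto
  qed
  moreover have "\<forall>v\<in>S. ?h v > 0"
    using \<sigma> Hpos SV unfolding sign_configs_def by auto
  ultimately show "?h \<in> hspace V E H S"
    using sign_consistent_in_hspace[OF G PH Fu _ _ _ consistent] by auto
qed

lemma sign_of_hspace_in_sign_configs:
  assumes G: "graph V E" and PH: "positive_height_function V E H" and SV: "S \<subseteq> V"
    and uE: "u \<subseteq> E" and h: "h \<in> hspace V E H S" and consistent: "sign_consistent u h"
  shows "(\<lambda>v\<in>V. sgn (h v)) \<in> sign_configs V u S"
proof -
  have "h v \<noteq> 0" if "v \<in> V" for v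
    using h PH that unfolding hspace_def positive_height_function_def by force
  then have "(\<lambda>v\<in>V. sgn (h v)) \<in> V \<rightarrow>\<^sub>E {-1, 1}"
    by (auto simp: sgn_if)
  moreover have "\<forall>v\<in>S. (\<lambda>v\<in>V. sgn (h v)) v = 1"
    using h SV unfolding hspace_def by auto
  moreover have "constant_on_components V u (\<lambda>v\<in>V. sgn (h v))"
    using consistent constant_on_components_cong[OF G uE, of "\<lambda>v\<in>V. sgn (h v)" "\<lambda>v. sgn (h v)"]
    unfolding sign_consistent_iff_components[OF G uE] by auto
  ultimately show ?thesis
    unfolding sign_configs_def by auto
qed

lemma card_hspace_sign_consistent:
  assumes G: "graph V E" and PH: "positive_height_function V E H" and SV: "S \<subseteq> V"
    and Fu: "E_fix E H \<subseteq> u" and uE: "u \<subseteq> E"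
  shows "card {h\<in>hspace V E H S. sign_consistent u h \<and> P (\<lambda>v\<in>V. sgn (h v))}
    = card {\<sigma>\<in>sign_configs V u S. P \<sigma>}"
proof -
  have Hpos: "\<forall>v\<in>V. H v > 0"
    using PH unfolding positive_height_function_def by auto
  have "bij_betw (\<lambda>\<sigma>. \<lambda>v\<in>V. \<sigma> v * H v) {\<sigma>\<in>sign_configs V u S. P \<sigma>}
      {h\<in>hspace V E H S. sign_consistent u h \<and> P (\<lambda>v\<in>V. sgn (h v))}"
  proof (rule bij_betw_byWitness[where f' = "\<lambda>h. \<lambda>v\<in>V. sgn (h v)"])
    show "\<forall>\<sigma>\<in>{\<sigma>\<in>sign_configs V u S. P \<sigma>}. (\<lambda>v\<in>V. sgn ((\<lambda>v\<in>V. \<sigma> v * H v) v)) = \<sigma>"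
      using sgn_restrict_sign_times_height[OF _ Hpos] unfolding sign_configs_def by blast
    show "\<forall>h\<in>{h\<in>hspace V E H S. sign_consistent u h \<and> P (\<lambda>v\<in>V. sgn (h v))}.
        (\<lambda>v\<in>V. (\<lambda>v\<in>V. sgn (h v)) v * H v) = h"
      using hspace_eq_sign_times_height by blast
    show "(\<lambda>\<sigma>. \<lambda>v\<in>V. \<sigma> v * H v) ` {\<sigma>\<in>sign_configs V u S. P \<sigma>}
        \<subseteq> {h\<in>hspace V E H S. sign_consistent u h \<and> P (\<lambda>v\<in>V. sgn (h v))}"
    proof (intro image_subsetI)
      fix \<sigma> assume \<sigma>: "\<sigma> \<in> {\<sigma>\<in>sign_configs V u S. P \<sigma>}"
      then have "\<sigma> \<in> V \<rightarrow>\<^sub>E {-1, 1}"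
        unfolding sign_configs_def by blast
      then show "(\<lambda>v\<in>V. \<sigma> v * H v) \<in> {h\<in>hspace V E H S. sign_consistent u h \<and> P (\<lambda>v\<in>V. sgn (h v))}"
        using sign_times_height_in_hspace[OF G PH SV Fu uE] sgn_restrict_sign_times_height[OF _ Hpos] \<sigma>
        by auto
    qed
    show "(\<lambda>h. \<lambda>v\<in>V. sgn (h v)) ` {h\<in>hspace V E H S. sign_consistent u h \<and> P (\<lambda>v\<in>V. sgn (h v))}
        \<subseteq> {\<sigma>\<in>sign_configs V u S. P \<sigma>}"
      using sign_of_hspace_in_sign_configs[OF G PH SV uE] by blast
  qed
  then show ?thesis
    by (simp add: bij_betw_same_card)
qed

lemma sign_configs_constant:
  assumes "\<sigma> \<in> sign_configs V u S" and "C \<in> components V u" and "x \<in> C" and "y \<in> C"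
  shows "\<sigma> x = \<sigma> y"
  using assms unfolding sign_configs_def constant_on_components_def by blast

definition component_signs :: "'v set \<Rightarrow> 'v set set \<Rightarrow> 'v set \<Rightarrow> ('v \<Rightarrow> int) \<Rightarrow> 'v set \<Rightarrow> int" where
  "component_signs V u S \<sigma> = (\<lambda>C\<in>free_components V u S. \<sigma> (SOME v. v \<in> C))"

definition vertex_signs :: "'v set \<Rightarrow> 'v set set \<Rightarrow> 'v set \<Rightarrow> ('v set \<Rightarrow> int) \<Rightarrow> 'v \<Rightarrow> int" where
  "vertex_signs V u S f =
     (\<lambda>v\<in>V. if (adj u)\<^sup>* `` {v} \<in> free_components V u S then f ((adj u)\<^sup>* `` {v}) else 1)"

lemma vertex_signs_component_signs:
  assumes \<sigma>: "\<sigma> \<in> sign_configs V u S"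
  shows "vertex_signs V u S (component_signs V u S \<sigma>) = \<sigma>"
proof
  fix v
  let ?C = "(adj u)\<^sup>* `` {v}"
  have self: "v \<in> ?C"
    by simp
  show "vertex_signs V u S (component_signs V u S \<sigma>) v = \<sigma> v"
  proof (cases "v \<in> V")
    case v: True
    note C = component_of_vertex[OF v]
    show ?thesis
    proof (cases "?C \<in> free_components V u S")
      case True
      then have "vertex_signs V u S (component_signs V u S \<sigma>) v = \<sigma> (SOME w. w \<in> ?C)"
        using v unfolding vertex_signs_def component_signs_def by simp
      also have "\<dots> = \<sigma> v"
        using sign_configs_constant[OF \<sigma> C some_in_component[OF C] self] .
      finally show ?thesis .
    next
      case False
      then obtain s where s: "s \<in> S" "s \<in> ?C"
        using C unfolding free_components_def by blast
      have "vertex_signs V u S (component_signs V u S \<sigma>) v = 1"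
        unfolding vertex_signs_def restrict_apply'[OF v] if_not_P[OF False] ..
      also have "\<dots> = \<sigma> s"
        using \<sigma> s(1) unfolding sign_configs_def by simp
      also have "\<dots> = \<sigma> v"
        using sign_configs_constant[OF \<sigma> C s(2) self] .
      finally show ?thesis .
    qed
  next
    case False
    have "\<sigma> \<in> V \<rightarrow>\<^sub>E {-1, 1}"
      using \<sigma> unfolding sign_configs_def by blast
    then show ?thesis
      using PiE_arb[of \<sigma> V _ v] False unfolding vertex_signs_def by simp
  qed
qed

lemma component_signs_vertex_signs:
  assumes G: "graph V E" and uE: "u \<subseteq> E" and f: "f \<in> free_components V u S \<rightarrow>\<^sub>E {-1, 1}"
  shows "component_signs V u S (vertex_signs V u S f) = f"
proof
  fix C
  show "component_signs V u S (vertex_signs V u S f) C = f C"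
  proof (cases "C \<in> free_components V u S")
    case True
    then have C: "C \<in> components V u"
      unfolding free_components_def by blast
    have "(SOME v. v \<in> C) \<in> V"
      using components_subset[OF G uE C] some_in_component[OF C] by blast
    moreover have "(adj u)\<^sup>* `` {SOME v. v \<in> C} = C"
      using component_of_member[OF C some_in_component[OF C]] by simp
    ultimately show ?thesis
      using True unfolding component_signs_def vertex_signs_def by simp
  next
    case False
    then show ?thesis
      using PiE_arb[OF f False] unfolding component_signs_def by simp
  qed
qed

lemma component_signs_in_PiE:
  assumes G: "graph V E" and uE: "u \<subseteq> E" and \<sigma>: "\<sigma> \<in> sign_configs V u S"
  shows "component_signs V u S \<sigma> \<in> free_components V u S \<rightarrow>\<^sub>E {-1, 1}"
proof -
  have "\<sigma> (SOME v. v \<in> C) \<in> {-1, 1}" if "C \<in> free_components V u S" for C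
  proof -
    have "C \<in> components V u"
      using that unfolding free_components_def by blast
    then have "(SOME v. v \<in> C) \<in> V"
      using components_subset[OF G uE] some_in_component by blast
    then show ?thesis
      using \<sigma> unfolding sign_configs_def by blast
  qed
  then show ?thesis
    unfolding component_signs_def restrict_PiE_iff by blast
qed

lemma vertex_signs_in_sign_configs:
  assumes G: "graph V E" and uE: "u \<subseteq> E" and SV: "S \<subseteq> V"
    and f: "f \<in> free_components V u S \<rightarrow>\<^sub>E {-1, 1}"
  shows "vertex_signs V u S f \<in> sign_configs V u S"
proof -
  have "vertex_signs V u S f \<in> V \<rightarrow>\<^sub>E {-1, 1}"
    using f unfolding vertex_signs_def restrict_PiE_iff by auto
  moreover have "constant_on_components V u (vertex_signs V u S f)"
    unfolding constant_on_components_def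
  proof (intro ballI)
    fix C x y assume C: "C \<in> components V u" and xy: "x \<in> C" "y \<in> C"
    then have "(adj u)\<^sup>* `` {x} = (adj u)\<^sup>* `` {y}" "x \<in> V" "y \<in> V"
      using component_of_member[OF C] components_subset[OF G uE C] by auto
    then show "vertex_signs V u S f x = vertex_signs V u S f y"
      unfolding vertex_signs_def by simp
  qed
  moreover have "vertex_signs V u S f v = 1" if "v \<in> S" for v
  proof -
    have "(adj u)\<^sup>* `` {v} \<notin> free_components V u S"
      using that unfolding free_components_def by blast
    then show ?thesis
      using that SV unfolding vertex_signs_def by auto
  qed
  ultimately show ?thesis
    unfolding sign_configs_def by blast
qed

lemma card_sign_configs:
  assumes G: "graph V E" and uE: "u \<subseteq> E" and SV: "S \<subseteq> V"
  shows "card (sign_configs V u S) = 2 ^ card (free_components V u S)"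
proof -
  have "bij_betw (component_signs V u S) (sign_configs V u S) (free_components V u S \<rightarrow>\<^sub>E {-1, 1})"
  proof (rule bij_betw_byWitness[where f' = "vertex_signs V u S"])
    show "\<forall>\<sigma>\<in>sign_configs V u S. vertex_signs V u S (component_signs V u S \<sigma>) = \<sigma>"
      using vertex_signs_component_signs by blast
    show "\<forall>f\<in>free_components V u S \<rightarrow>\<^sub>E {-1, 1}. component_signs V u S (vertex_signs V u S f) = f"
      using component_signs_vertex_signs[OF G uE] by blast
    show "component_signs V u S ` sign_configs V u S \<subseteq> free_components V u S \<rightarrow>\<^sub>E {-1, 1}"
      using component_signs_in_PiE[OF G uE] by blast
    show "vertex_signs V u S ` (free_components V u S \<rightarrow>\<^sub>E {-1, 1}) \<subseteq> sign_configs V u S"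
      using vertex_signs_in_sign_configs[OF G uE SV] by blast
  qed
  then have "card (sign_configs V u S) = card (free_components V u S \<rightarrow>\<^sub>E {-1::int, 1})"
    by (rule bij_betw_same_card)
  also have "\<dots> = card {-1::int, 1} ^ card (free_components V u S)"
    using finite_components[OF G] unfolding free_components_def
    by (simp add: card_PiE del: card_insert_disjoint)
  also have "card {-1::int, 1} = 2"
    by simp
  finally show ?thesis .
qed

lemma card_sign_consistent_heights:
  assumes G: "graph V E" and PH: "positive_height_function V E H" and SV: "S \<subseteq> V"
    and Fu: "E_fix E H \<subseteq> u" and uE: "u \<subseteq> E"
  shows "card {h\<in>hspace V E H S. sign_consistent u h} = 2 ^ card (free_components V u S)"
  using card_hspace_sign_consistent[OF G PH SV Fu uE, where P = "\<lambda>_. True"]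
    card_sign_configs[OF G uE SV] by simp

lemma wired_class_avoiding:
  assumes avoid: "(adj u)\<^sup>* `` {x} \<inter> S = {}"
  shows "(adj u \<union> S \<times> S)\<^sup>* `` {x} = (adj u)\<^sup>* `` {x}"
proof
  have "(x, y) \<in> (adj u)\<^sup>*" if "(x, y) \<in> (adj u \<union> S \<times> S)\<^sup>*" for y
    using that
  proof (induction rule: rtrancl_induct)
    case (step y z)
    show ?case
    proof (cases "(y, z) \<in> adj u")
      case True
      then show ?thesis
        using step.IH by (rule rtrancl_into_rtrancl[rotated])
    next
      case False
      then have "y \<in> S"
        using step.hyps(2) by auto
      then show ?thesis
        using step.IH avoid by auto
    qed
  qed simp
  then show "(adj u \<union> S \<times> S)\<^sup>* `` {x} \<subseteq> (adj u)\<^sup>* `` {x}"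
    by auto
  show "(adj u)\<^sup>* `` {x} \<subseteq> (adj u \<union> S \<times> S)\<^sup>* `` {x}"
    using rtrancl_mono[of "adj u" "adj u \<union> S \<times> S"] by auto
qed

lemma wired_class_meeting:
  assumes s: "s \<in> S" and meet: "(adj u)\<^sup>* `` {x} \<inter> S \<noteq> {}"
  shows "(adj u \<union> S \<times> S)\<^sup>* `` {x} = (adj u \<union> S \<times> S)\<^sup>* `` {s}"
proof -
  have "sym (adj u \<union> S \<times> S)"
    using sym_adj[of u] unfolding sym_def by auto
  then have equiv: "equiv UNIV ((adj u \<union> S \<times> S)\<^sup>*)"
    by (rule equiv_rtrancl_of_sym)
  obtain t where t: "t \<in> S" "(x, t) \<in> (adj u)\<^sup>*"
    using meet by auto
  have "(x, t) \<in> (adj u \<union> S \<times> S)\<^sup>*"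
    using rtrancl_mono[of "adj u" "adj u \<union> S \<times> S"] t(2) by auto
  moreover have "(t, s) \<in> (adj u \<union> S \<times> S)\<^sup>*"
    using s t(1) by auto
  ultimately have "(x, s) \<in> (adj u \<union> S \<times> S)\<^sup>*"
    by (rule rtrancl_trans)
  then show ?thesis
    by (rule equiv_class_eq[OF equiv])
qed

lemma wired_components_eq:
  assumes SV: "S \<subseteq> V" and s: "s \<in> S"
  shows "wired_components V S u = insert ((adj u \<union> S \<times> S)\<^sup>* `` {s}) (free_components V u S)"
proof
  show "wired_components V S u \<subseteq> insert ((adj u \<union> S \<times> S)\<^sup>* `` {s}) (free_components V u S)"
  proof
    fix C assume "C \<in> wired_components V S u"
    then obtain x where x: "x \<in> V" "C = (adj u \<union> S \<times> S)\<^sup>* `` {x}"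
      unfolding wired_components_def by (auto elim: quotientE)
    show "C \<in> insert ((adj u \<union> S \<times> S)\<^sup>* `` {s}) (free_components V u S)"
    proof (cases "(adj u)\<^sup>* `` {x} \<inter> S = {}")
      case True
      then show ?thesis
        using wired_class_avoiding[OF True] x component_of_vertex[OF x(1)]
        unfolding free_components_def by auto
    next
      case False
      then show ?thesis
        using wired_class_meeting[OF s False] x by auto
    qed
  qed
  show "insert ((adj u \<union> S \<times> S)\<^sup>* `` {s}) (free_components V u S) \<subseteq> wired_components V S u"
  proof
    fix C assume C: "C \<in> insert ((adj u \<union> S \<times> S)\<^sup>* `` {s}) (free_components V u S)"
    show "C \<in> wired_components V S u"
    proof (cases "C = (adj u \<union> S \<times> S)\<^sup>* `` {s}")
      case True
      then show ?thesis
        using s SV unfolding wired_components_def by (auto intro: quotientI)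
    next
      case False
      then obtain x where x: "x \<in> V" "C = (adj u)\<^sup>* `` {x}" "(adj u)\<^sup>* `` {x} \<inter> S = {}"
        using C unfolding free_components_def components_def by (auto elim: quotientE)
      then have "C = (adj u \<union> S \<times> S)\<^sup>* `` {x}"
        using wired_class_avoiding[OF x(3)] by simp
      then show ?thesis
        using x(1) unfolding wired_components_def by (auto intro: quotientI)
    qed
  qed
qed

lemma card_wired_components:
  assumes G: "graph V E" and SV: "S \<subseteq> V"
  shows "card (wired_components V S u) = card (free_components V u S) + (if S = {} then 0 else 1)"
proof (cases "S = {}")
  case True
  then show ?thesis
    unfolding wired_components_def free_components_def components_def by simp
next
  case False
  then obtain s where s: "s \<in> S"
    by auto
  have "(adj u \<union> S \<times> S)\<^sup>* `` {s} \<notin> free_components V u S"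
    using s unfolding free_components_def by auto
  moreover have "finite (free_components V u S)"
    using finite_components[OF G] unfolding free_components_def by auto
  ultimately show ?thesis
    unfolding wired_components_eq[OF SV s] using False by simp
qed

lemma fk_weight_eq:
  assumes G: "graph V E" and SV: "S \<subseteq> V" and c: "\<forall>e\<in>E. c e \<ge> 1"
    and Fu: "F \<subseteq> u" and uE: "u \<subseteq> E"
  shows "2 ^ card (wired_components V S u) *
      (\<Prod>e\<in>E - F. pe c e ^ (if e \<in> u then 1 else 0) * (1 - pe c e) ^ (if e \<notin> u then 1 else 0))
    = ((if S = {} then 1 else 2) * (\<Prod>e\<in>E - F. 1 / c e))
      * (odds_weight c F u * 2 ^ card (free_components V u S))"
proof -
  have fin: "finite (E - F)"
    using graph_finite_edges[OF G] by auto
  have "(\<Prod>e\<in>E - F. pe c e ^ (if e \<in> u then 1 else 0) * (1 - pe c e) ^ (if e \<notin> u then 1 else 0))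
      = (\<Prod>e\<in>E - F. 1 / c e * (if e \<in> u then c e - 1 else 1))"
  proof (rule prod.cong[OF refl])
    fix e assume "e \<in> E - F"
    then have "c e \<noteq> 0"
      using c by force
    then show "pe c e ^ (if e \<in> u then 1 else 0) * (1 - pe c e) ^ (if e \<notin> u then 1 else 0)
        = 1 / c e * (if e \<in> u then c e - 1 else 1)"
      by (simp add: pe_def field_simps)
  qed
  also have "\<dots> = (\<Prod>e\<in>E - F. 1 / c e) * (\<Prod>e\<in>E - F. if e \<in> u then c e - 1 else 1)"
    by (rule prod.distrib)
  also have "(\<Prod>e\<in>E - F. if e \<in> u then c e - 1 else 1) = (\<Prod>e\<in>u - F. c e - 1)"
    using fin uE by (intro prod.mono_neutral_cong_right) auto
  also have "\<dots> = odds_weight c F u"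
    unfolding odds_weight_def using Fu by simp
  finally show ?thesis
    unfolding card_wired_components[OF G SV] by (simp add: power_add)
qed

lemma fk_cond_eq:
  assumes G: "graph V E" and PH: "positive_height_function V E H" and SV: "S \<subseteq> V"
    and c: "\<forall>e\<in>E. c e \<ge> 1" and wE: "w \<subseteq> E"
  shows "fk_cond V E c S (E_fix E H) w
    = odds_weight c (E_fix E H) w * card {h\<in>hspace V E H S. sign_consistent w h}
      / (\<Sum>u\<in>Pow E. odds_weight c (E_fix E H) u * card {h\<in>hspace V E H S. sign_consistent u h})"
proof -
  let ?F = "E_fix E H"
  let ?N = "\<lambda>u. real (card {h\<in>hspace V E H S. sign_consistent u h})"
  let ?fk = "\<lambda>u. 2 ^ card (wired_components V S u) *
    (\<Prod>e\<in>E - ?F. pe c e ^ (if e \<in> u then 1 else 0) * (1 - pe c e) ^ (if e \<notin> u then 1 else 0))"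
  define K :: real where "K = (if S = {} then 1 else 2) * (\<Prod>e\<in>E - ?F. 1 / c e)"
  have "K > 0"
    unfolding K_def using c by (auto intro!: prod_pos)
  have odds_zero: "odds_weight c ?F u = 0" if "\<not> ?F \<subseteq> u" for u
    using that unfolding odds_weight_def by simp
  have fk: "?fk u = K * (odds_weight c ?F u * ?N u)" if "?F \<subseteq> u" "u \<subseteq> E" for u
    using fk_weight_eq[OF G SV c that] card_sign_consistent_heights[OF G PH SV that]
    unfolding K_def by simp
  have "(\<Sum>u\<in>{u. ?F \<subseteq> u \<and> u \<subseteq> E}. ?fk u) = K * (\<Sum>u\<in>{u. ?F \<subseteq> u \<and> u \<subseteq> E}. odds_weight c ?F u * ?N u)"
    by (simp add: fk sum_distrib_left)
  also have "(\<Sum>u\<in>{u. ?F \<subseteq> u \<and> u \<subseteq> E}. odds_weight c ?F u * ?N u)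
      = (\<Sum>u\<in>Pow E. odds_weight c ?F u * ?N u)"
    using graph_finite_edges[OF G] odds_zero by (intro sum.mono_neutral_left) auto
  finally have "(\<Sum>u\<in>{u. ?F \<subseteq> u \<and> u \<subseteq> E}. ?fk u) = K * (\<Sum>u\<in>Pow E. odds_weight c ?F u * ?N u)" .
  moreover have "(if ?F \<subseteq> w \<and> w \<subseteq> E then ?fk w else 0) = K * (odds_weight c ?F w * ?N w)"
    using fk[of w] odds_zero[of w] wE by auto
  ultimately show ?thesis
    unfolding fk_cond_def Let_def using \<open>K > 0\<close> by simp
qed

lemma hprob_omega_not_subset:
  assumes "\<not> w \<subseteq> E"
  shows "hprob V E c H S (\<lambda>(h, B). omega E h B = w \<and> P h) = 0"
proof -
  have "omega E h B \<subseteq> E" for h B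
    unfolding omega_def by auto
  then have no_outcome: "{x\<in>hspace V E H S \<times> Pow E. (\<lambda>(h, B). omega E h B = w \<and> P h) x} = {}"
    using assms by auto
  show ?thesis
    unfolding hprob_def no_outcome by simp
qed

lemma restrict_in_sign_configs_iff:
  assumes G: "graph V E" and uE: "u \<subseteq> E" and SV: "S \<subseteq> V" and \<sigma>: "\<forall>v\<in>V. \<sigma> v \<in> {-1, 1}"
  shows "(\<lambda>v\<in>V. \<sigma> v) \<in> sign_configs V u S \<longleftrightarrow> constant_on_components V u \<sigma> \<and> (\<forall>v\<in>S. \<sigma> v = 1)"
proof -
  have "constant_on_components V u (\<lambda>v\<in>V. \<sigma> v) \<longleftrightarrow> constant_on_components V u \<sigma>"
    by (rule constant_on_components_cong[OF G uE]) simp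
  moreover have "(\<forall>v\<in>S. (\<lambda>v\<in>V. \<sigma> v) v = 1) \<longleftrightarrow> (\<forall>v\<in>S. \<sigma> v = 1)"
    using SV by auto
  ultimately show ?thesis
    unfolding sign_configs_def restrict_PiE_iff using \<sigma> by auto
qed

lemma sign_law_given_omega:
  assumes G: "graph V E" and PH: "positive_height_function V E H" and SV: "S \<subseteq> V"
    and c: "\<forall>e\<in>E. c e \<ge> 1"
    and pos: "hprob V E c H S (\<lambda>(h, B). omega E h B = w) > 0" and \<sigma>: "\<forall>v\<in>V. \<sigma> v \<in> {-1, 1}"
  shows "hprob V E c H S (\<lambda>(h, B). omega E h B = w \<and> (\<forall>v\<in>V. sgn (h v) = \<sigma> v))
      / hprob V E c H S (\<lambda>(h, B). omega E h B = w)
    = (if constant_on_components V w \<sigma> \<and> (\<forall>v\<in>S. \<sigma> v = 1)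
       then 1 / 2 ^ card (free_components V w S) else 0)"
proof -
  let ?F = "E_fix E H" and ?hs = "hspace V E H S"
  let ?Z = "\<Sum>u\<in>Pow E. odds_weight c ?F u * card {h\<in>?hs. sign_consistent u h}"
  let ?cond = "constant_on_components V w \<sigma> \<and> (\<forall>v\<in>S. \<sigma> v = 1)"
  have wE: "w \<subseteq> E"
    using pos hprob_omega_not_subset[of w E V c H S "\<lambda>_. True"] by fastforce
  have total: "hprob V E c H S (\<lambda>(h, B). omega E h B = w)
      = odds_weight c ?F w * card {h\<in>?hs. sign_consistent w h} / ?Z"
    using hprob_omega[OF G PH c wE, where P = "\<lambda>_. True"] by simp
  then have "odds_weight c ?F w \<noteq> 0" "?Z \<noteq> 0"
    using pos by auto
  then have Fw: "?F \<subseteq> w"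
    unfolding odds_weight_def by meson
  have "{h\<in>?hs. sign_consistent w h \<and> (\<forall>v\<in>V. sgn (h v) = \<sigma> v)}
      = {h\<in>?hs. sign_consistent w h \<and> (\<lambda>v\<in>V. sgn (h v)) = (\<lambda>v\<in>V. \<sigma> v)}"
    by (auto simp: fun_eq_iff)
  then have "card {h\<in>?hs. sign_consistent w h \<and> (\<forall>v\<in>V. sgn (h v) = \<sigma> v)}
      = card {\<tau>\<in>sign_configs V w S. \<tau> = (\<lambda>v\<in>V. \<sigma> v)}"
    using card_hspace_sign_consistent[OF G PH SV Fw wE, where P = "\<lambda>\<tau>. \<tau> = (\<lambda>v\<in>V. \<sigma> v)"]
    by (simp only:)
  also have "{\<tau>\<in>sign_configs V w S. \<tau> = (\<lambda>v\<in>V. \<sigma> v)} = (if ?cond then {\<lambda>v\<in>V. \<sigma> v} else {})"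
    using restrict_in_sign_configs_iff[OF G wE SV \<sigma>] by auto
  also have "card \<dots> = (if ?cond then 1 else 0)"
    by simp
  finally have "hprob V E c H S (\<lambda>(h, B). omega E h B = w \<and> (\<forall>v\<in>V. sgn (h v) = \<sigma> v))
      = odds_weight c ?F w * (if ?cond then 1 else 0) / ?Z"
    using hprob_omega[OF G PH c wE] by simp
  then show ?thesis
    using total card_sign_consistent_heights[OF G PH SV Fw wE] \<open>odds_weight c ?F w \<noteq> 0\<close> \<open>?Z \<noteq> 0\<close>
    by simp
qed

theorem corollary2p5:
  fixes V :: "'v set" and E :: "'v set set" and c :: "'v set \<Rightarrow> real"
    and H :: "'v \<Rightarrow> int" and S :: "'v set"
  assumes "graph V E" and "graph_connected V E"
    and "\<forall>e\<in>E. c e \<ge> 1"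
    and "positive_height_function V E H"
    and "S \<subseteq> V"
  shows "(\<forall>w. w \<subseteq> E \<longrightarrow>
            hprob V E c H S (\<lambda>(h,B). omega E h B = w) = fk_cond V E c S (E_fix E H) w)
       \<and> (\<forall>w \<sigma>. hprob V E c H S (\<lambda>(h,B). omega E h B = w) > 0 \<and> (\<forall>v\<in>V. \<sigma> v \<in> {-1, 1}) \<longrightarrow>
            hprob V E c H S (\<lambda>(h,B). omega E h B = w \<and> (\<forall>v\<in>V. sgn (h v) = \<sigma> v))
              / hprob V E c H S (\<lambda>(h,B). omega E h B = w)
            = (if (\<forall>C\<in>components V w. \<forall>u\<in>C. \<forall>v\<in>C. \<sigma> u = \<sigma> v) \<and> (\<forall>v\<in>S. \<sigma> v = 1)
               then 1 / 2 ^ card {C\<in>components V w. C \<inter> S = {}}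
               else 0))"
proof -
  have "hprob V E c H S (\<lambda>(h,B). omega E h B = w) = fk_cond V E c S (E_fix E H) w" if "w \<subseteq> E" for w
    using hprob_omega[OF assms(1,4,3) that, where P = "\<lambda>_. True"] fk_cond_eq[OF assms(1,4,5,3) that]
    by simp
  then show ?thesis
    using sign_law_given_omega[OF assms(1,4,5,3)]
    unfolding constant_on_components_def free_components_def by blast
qed

end
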